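(* Let $d\ge 1$, $T>0$, let $U:\mathbb{R}^d\to\mathbb{R}$ be continuously differentiable, and let $G:\mathbb{R}^d\to\mathbb{R}^{d\times d}$ be continuous with $G(y)$ symmetric and $v^{\intercal}G(y)v\ge v^{\intercal}\Gamma v>0$ for all $y\in\mathbb{R}^d$ and all $v\neq 0$, where $\Gamma$ is a fixed symmetric positive definite matrix. Consider the gradient system $G(y(t))\dot y(t)=-\nabla U(y(t))$, $y(0)=y_0\in\mathbb{R}^d$. Let $\varphi_0,\ldots,\varphi_{r-1}$ be sufficiently smooth, linearly independent real functions on $[0,T]$, let $0<h\le T$, and let $X_h,Y_h$, $\mathcal{P}_h$ be as described in the context. Suppose $\tilde u\in X_h$ satisfies $\tilde u(0)=y_0$ and $$G(\tilde u(\tau))\,\tilde u'(\tau)=-\mathcal{P}_h\big(\nabla U(\tilde u(\cdot))\big)(\tau),\qquad \tau\in[0,1],$$ and set $y_1=\tilde u(1)$ (the FFED method). Then $U(y_1)\le U(y_0)$; i.e. the FFED method is energy-diminishing for every stepsize $h$.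
   Context: Function spaces: $Y_h$ is the set of $\mathbb{R}^d$-valued functions on $[0,1]$ of the form $\sum_{i=0}^{r-1}\tilde\varphi_i(\tau)W_i$ with $W_i\in\mathbb{R}^d$, where $\tilde\varphi_i(\tau)=\varphi_i(\tau h)$; $X_h$ is the set of $\mathbb{R}^d$-valued functions on $[0,1]$ of the form $W+\sum_{i=0}^{r-1}\big(\int_0^{\tau h}\varphi_i(s)\,ds\big)W_i$ with $W,W_i\in\mathbb{R}^d$. Equivalently $\tilde u(\tau)=u(\tau h)$ for $u$ in the space $X=\mathrm{span}\{1,\int_0^t\varphi_0,\ldots,\int_0^t\varphi_{r-1}\}$, and the notation $\tilde u'(\tau)$ means $u'(\tau h)=\frac1h\frac{d}{d\tau}\tilde u(\tau)$, which lies in $Y_h$. Projection: for a continuous $\tilde w:[0,1]\to\mathbb{R}^d$, $\mathcal{P}_h\tilde w$ is the unique element of $Y_h$ such that $\int_0^1\tilde v(\tau)\cdot\mathcal{P}_h\tilde w(\tau)\,d\tau=\int_0^1\tilde v(\tau)\cdot\tilde w(\tau)\,d\tau$ for all $\tilde v\in Y_h$, where $\cdot$ denotes entrywise multiplication of vectors (so each component of $\mathcal{P}_h\tilde w$ is the $L^2(0,1)$-orthogonal projection of the corresponding component of $\tilde w$ onto $\mathrm{span}\{\tilde\varphi_0,\ldots,\tilde\varphi_{r-1}\}$). Explicitly $\mathcal{P}_h\tilde w(\tau)=\int_0^1\sum_{i=0}^{r-1}\tilde\psi_i(\tau)\tilde\psi_i(\sigma)\tilde w(\sigma)\,d\sigma$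 with $\{\tilde\psi_i\}$ an $L^2(0,1)$-orthonormal basis of $\mathrm{span}\{\tilde\varphi_0,\ldots,\tilde\varphi_{r-1}\}$. *)

theory Defs
  imports "HOL-Analysis.Analysis"
begin

definition Yh :: "(nat \<Rightarrow> real \<Rightarrow> real) \<Rightarrow> nat \<Rightarrow> real \<Rightarrow> (real \<Rightarrow> real^'n) set" where
  "Yh \<phi> r h = {f. \<exists>W :: nat \<Rightarrow> real^'n. f = (\<lambda>\<tau>. \<Sum>i<r. \<phi> i (\<tau> * h) *\<^sub>R W i)}"

definition Xh :: "(nat \<Rightarrow> real \<Rightarrow> real) \<Rightarrow> nat \<Rightarrow> real \<Rightarrow> (real \<Rightarrow> real^'n) set" where
  "Xh \<phi> r h = {f. \<exists>(W :: real^'n) (Ws :: nat \<Rightarrow> real^'n).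
      f = (\<lambda>\<tau>. W + (\<Sum>i<r. integral {0..\<tau> * h} (\<phi> i) *\<^sub>R Ws i))}"

definition emul :: "real^'n \<Rightarrow> real^'n \<Rightarrow> real^'n" where
  "emul a b = (\<chi> j. a $ j * b $ j)"

text \<open>p is the projection P_h w: p lies in Y_h and has the same (entrywise) L2(0,1)
  moments against every element of Y_h as w.\<close>
definition is_Ph :: "(nat \<Rightarrow> real \<Rightarrow> real) \<Rightarrow> nat \<Rightarrow> real \<Rightarrow> (real \<Rightarrow> real^'n) \<Rightarrow> (real \<Rightarrow> real^'n) \<Rightarrow> bool" where
  "is_Ph \<phi> r h w p \<longleftrightarrow> p \<in> Yh \<phi> r h \<and>
     (\<forall>v \<in> Yh \<phi> r h. integral {0..1} (\<lambda>\<sigma>. emul (v \<sigma>) (p \<sigma>)) = integral {0..1} (\<lambda>\<sigma>. emul (v \<sigma>) (w \<sigma>)))"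

definition tder :: "real \<Rightarrow> (real \<Rightarrow> real^'n) \<Rightarrow> real \<Rightarrow> real^'n" where
  "tder h u \<tau> = (1 / h) *\<^sub>R vector_derivative u (at \<tau> within {0..1})"

end

theory Submission
  imports Defs
begin

text \<open>Write the scheme as \<open>G(u) w = -P_h(\<nabla>U(u))\<close> with \<open>w = u~'\<close>, which lies in \<open>Y_h\<close>.
  Along the step, \<open>U(u(1)) - U(u(0)) = h \<integral>\<^sub>0\<^sup>1 w \<bullet> \<nabla>U(u)\<close>; because \<open>w\<close> is an
  admissible test function of the projection, \<open>\<nabla>U(u)\<close> may be replaced by \<open>P_h(\<nabla>U(u)) = -G(u) w\<close>,
  so the energy change is \<open>-h \<integral>\<^sub>0\<^sup>1 w \<bullet> G(u) w \<le> 0\<close>.\<close>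

lemma continuous_on_emul:
  fixes f g :: "real \<Rightarrow> real^'n"
  assumes "continuous_on S f" "continuous_on S g"
  shows "continuous_on S (\<lambda>x. emul (f x) (g x))"
  unfolding emul_def
  by (intro continuous_on_vec_lambda continuous_on_mult continuous_on_component assms)

lemma integral_inner_eq_sum_integral_emul:
  fixes f g :: "real \<Rightarrow> real^'n"
  assumes "(\<lambda>x. emul (f x) (g x)) integrable_on S"
  shows "integral S (\<lambda>x. f x \<bullet> g x) = (\<Sum>j\<in>UNIV. integral S (\<lambda>x. emul (f x) (g x)) $ j)"
proof -
  have "integral S (\<lambda>x. f x \<bullet> g x) = integral S (\<lambda>x. \<Sum>j\<in>UNIV. emul (f x) (g x) $ j)"
    by (simp add: emul_def inner_vec_def)
  also have "\<dots> = (\<Sum>j\<in>UNIV. integral S (\<lambda>x. emul (f x) (g x) $ j))"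
    by (rule integral_sum)
      (auto intro: integrable_linear[OF assms bounded_linear_vec_nth, unfolded o_def])
  also have "\<dots> = (\<Sum>j\<in>UNIV. integral S (\<lambda>x. emul (f x) (g x)) $ j)"
    using assms by simp
  finally show ?thesis .
qed

lemma is_Ph_integral_inner:
  assumes "is_Ph \<phi> r h w p" "v \<in> Yh \<phi> r h"
    and "continuous_on {0..1} v" "continuous_on {0..1} w" "continuous_on {0..1} p"
  shows "integral {0..1} (\<lambda>\<sigma>. v \<sigma> \<bullet> p \<sigma>) = integral {0..1} (\<lambda>\<sigma>. v \<sigma> \<bullet> w \<sigma>)"
proof -
  have "integral {0..1} (\<lambda>\<sigma>. emul (v \<sigma>) (p \<sigma>)) = integral {0..1} (\<lambda>\<sigma>. emul (v \<sigma>) (w \<sigma>))"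
    using assms(1,2) unfolding is_Ph_def by blast
  then show ?thesis
    using integral_inner_eq_sum_integral_emul[of v p] integral_inner_eq_sum_integral_emul[of v w]
      integrable_continuous_real[OF continuous_on_emul[OF assms(3,5)]]
      integrable_continuous_real[OF continuous_on_emul[OF assms(3,4)]]
    by simp
qed

lemma scaled_unit_interval_subset:
  fixes h T :: real
  assumes "0 < h" "h \<le> T"
  shows "(\<lambda>\<tau>. \<tau> * h) ` {0..1} \<subseteq> {0..T}"
  using assms by (auto, smt (verit) mult_left_le_one_le)

lemma Yh_continuous_on:
  assumes "v \<in> Yh \<phi> r h" "\<And>i. i < r \<Longrightarrow> continuous_on {0..T} (\<phi> i)" "0 < h" "h \<le> T"
  shows "continuous_on {0..1} v"
proof -
  obtain W where v: "v = (\<lambda>\<tau>. \<Sum>i<r. \<phi> i (\<tau> * h) *\<^sub>R W i)"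
    using assms(1) unfolding Yh_def by blast
  have "continuous_on {0..1} (\<lambda>\<tau>. \<phi> i (\<tau> * h))" if "i < r" for i
    using continuous_on_compose[of "{0..1}" "\<lambda>\<tau>. \<tau> * h" "\<phi> i"]
      continuous_on_subset[OF assms(2)[OF that] scaled_unit_interval_subset[OF assms(3,4)]]
    by (simp add: o_def continuous_intros)
  then show ?thesis unfolding v by (auto intro!: continuous_intros)
qed

lemma has_vector_derivative_scaleR_left:
  fixes f :: "real \<Rightarrow> real" and c :: "'a::real_normed_vector"
  assumes "(f has_vector_derivative f') F"
  shows "((\<lambda>x. f x *\<^sub>R c) has_vector_derivative (f' *\<^sub>R c)) F"
  using has_derivative_scaleR_left[OF assms[unfolded has_vector_derivative_def], of c]
  by (simp add: has_vector_derivative_def)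

lemma Xh_has_vector_derivative:
  assumes "u \<in> Xh \<phi> r h" "\<And>i. i < r \<Longrightarrow> continuous_on {0..T} (\<phi> i)" "0 < h" "h \<le> T"
  obtains w where "w \<in> Yh \<phi> r h"
    and "\<And>\<tau>. \<tau> \<in> {0..1} \<Longrightarrow> (u has_vector_derivative h *\<^sub>R w \<tau>) (at \<tau> within {0..1})"
proof -
  obtain W Ws where u: "u = (\<lambda>\<tau>. W + (\<Sum>i<r. integral {0..\<tau> * h} (\<phi> i) *\<^sub>R Ws i))"
    using assms(1) unfolding Xh_def by blast
  define w where "w = (\<lambda>\<tau>. \<Sum>i<r. \<phi> i (\<tau> * h) *\<^sub>R Ws i)"
  have "(u has_vector_derivative h *\<^sub>R w \<tau>) (at \<tau> within {0..1})" if \<tau>: "\<tau> \<in> {0..1}" for \<tau>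
  proof -
    have scale: "((\<lambda>\<tau>. \<tau> * h) has_vector_derivative h) (at \<tau> within {0..1})"
      unfolding has_real_derivative_iff_has_vector_derivative[symmetric]
      by (auto intro!: derivative_eq_intros)
    have "((\<lambda>\<tau>. integral {0..\<tau> * h} (\<phi> i)) has_vector_derivative h *\<^sub>R \<phi> i (\<tau> * h))
        (at \<tau> within {0..1})" if "i < r" for i
    proof -
      have "((\<lambda>s. integral {0..s} (\<phi> i)) has_vector_derivative \<phi> i (\<tau> * h))
          (at (\<tau> * h) within (\<lambda>\<tau>. \<tau> * h) ` {0..1})"
        using integral_has_vector_derivative[OF assms(2)[OF that]] \<tau>
          scaled_unit_interval_subset[OF assms(3,4)] has_vector_derivative_within_subset
        by blast
      from vector_diff_chain_within[OF scale this] show ?thesis by (simp add: o_def)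
    qed
    then have "((\<lambda>\<tau>. \<Sum>i<r. integral {0..\<tau> * h} (\<phi> i) *\<^sub>R Ws i) has_vector_derivative
        (\<Sum>i<r. (h *\<^sub>R \<phi> i (\<tau> * h)) *\<^sub>R Ws i)) (at \<tau> within {0..1})"
      by (intro has_vector_derivative_sum has_vector_derivative_scaleR_left) auto
    then have "((\<lambda>\<tau>. \<Sum>i<r. integral {0..\<tau> * h} (\<phi> i) *\<^sub>R Ws i) has_vector_derivative
        h *\<^sub>R w \<tau>) (at \<tau> within {0..1})"
      by (simp add: w_def scaleR_sum_right)
    from has_vector_derivative_add[OF has_vector_derivative_const[of W] this]
    show ?thesis unfolding u by simp
  qed
  moreover have "w \<in> Yh \<phi> r h" unfolding w_def Yh_def by blast
  ultimately show ?thesis using that by blast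
qed

lemma tder_eq:
  assumes "(u has_vector_derivative h *\<^sub>R w) (at \<tau> within {0..1})" "\<tau> \<in> {0..1}" "h \<noteq> 0"
  shows "tder h u \<tau> = w"
  using vector_derivative_within_closed_interval[of 0 1 \<tau> u "h *\<^sub>R w"] assms
  by (simp add: tder_def)

lemma has_integral_energy_change:
  fixes U :: "'a::real_inner \<Rightarrow> real" and u :: "real \<Rightarrow> 'a"
  assumes "\<And>y. (U has_derivative (\<lambda>v. gradU y \<bullet> v)) (at y)"
    and "\<And>\<tau>. \<tau> \<in> {a..b} \<Longrightarrow> (u has_vector_derivative u' \<tau>) (at \<tau> within {a..b})"
    and "a \<le> b"
  shows "((\<lambda>\<tau>. u' \<tau> \<bullet> gradU (u \<tau>)) has_integral U (u b) - U (u a)) {a..b}"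
proof -
  have "((U \<circ> u) has_vector_derivative u' \<tau> \<bullet> gradU (u \<tau>)) (at \<tau> within {a..b})"
    if "\<tau> \<in> {a..b}" for \<tau>
    using diff_chain_within[OF assms(2)[OF that, unfolded has_vector_derivative_def]
        has_derivative_subset[OF assms(1) subset_UNIV]]
    by (simp add: has_vector_derivative_def o_def inner_commute)
  from fundamental_theorem_of_calculus[OF assms(3) this] show ?thesis by simp
qed

lemma quadratic_form_nonneg_if_dominates_pd:
  assumes "\<And>v. v \<noteq> 0 \<Longrightarrow> v \<bullet> (A *v v) \<ge> v \<bullet> (\<Gamma> *v v)"
    and "\<And>v. v \<noteq> 0 \<Longrightarrow> v \<bullet> (\<Gamma> *v v) > 0"
  shows "0 \<le> v \<bullet> (A *v v)"
  using assms[of v] by (cases "v = 0") force+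

theorem theorem2p4:
  fixes U :: "real^'n \<Rightarrow> real" and gradU :: "real^'n \<Rightarrow> real^'n"
    and G :: "real^'n \<Rightarrow> real^'n^'n" and \<Gamma> :: "real^'n^'n"
    and \<phi> :: "nat \<Rightarrow> real \<Rightarrow> real" and r :: nat
    and T h :: real and y0 :: "real^'n" and u :: "real \<Rightarrow> real^'n"
  assumes T_pos: "T > 0"
    and U_grad: "\<And>y. (U has_derivative (\<lambda>v. gradU y \<bullet> v)) (at y)"
    and gradU_cont: "continuous_on UNIV gradU"
    and G_cont: "continuous_on UNIV G"
    and G_sym: "\<And>y. transpose (G y) = G y"
    and Gamma_sym: "transpose \<Gamma> = \<Gamma>"
    and G_ge: "\<And>y v. v \<noteq> 0 \<Longrightarrow> v \<bullet> (G y *v v) \<ge> v \<bullet> (\<Gamma> *v v)"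
    and Gamma_pd: "\<And>v. v \<noteq> 0 \<Longrightarrow> v \<bullet> (\<Gamma> *v v) > 0"
    and phi_cont: "\<And>i. i < r \<Longrightarrow> continuous_on {0..T} (\<phi> i)"
    and phi_indep: "\<And>c. (\<forall>t\<in>{0..T}. (\<Sum>i<r. c i * \<phi> i t) = 0) \<Longrightarrow> \<forall>i<r. c i = 0"
    and h: "0 < h" "h \<le> T"
    and u_X: "u \<in> Xh \<phi> r h"
    and u_init: "u 0 = y0"
    and u_eq: "\<exists>p. is_Ph \<phi> r h (\<lambda>\<sigma>. gradU (u \<sigma>)) p \<and>
                  (\<forall>\<tau>\<in>{0..1}. G (u \<tau>) *v tder h u \<tau> = - p \<tau>)"
  shows "U (u 1) \<le> U y0"
proof -
  obtain p where p: "is_Ph \<phi> r h (\<lambda>\<sigma>. gradU (u \<sigma>)) p"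
    and scheme: "\<And>\<tau>. \<tau> \<in> {0..1} \<Longrightarrow> G (u \<tau>) *v tder h u \<tau> = - p \<tau>"
    using u_eq by blast
  obtain w where w: "w \<in> Yh \<phi> r h"
    and du: "\<And>\<tau>. \<tau> \<in> {0..1} \<Longrightarrow> (u has_vector_derivative h *\<^sub>R w \<tau>) (at \<tau> within {0..1})"
    using Xh_has_vector_derivative[OF u_X phi_cont h] by blast
  have p_eq: "p \<tau> = - (G (u \<tau>) *v w \<tau>)" if "\<tau> \<in> {0..1}" for \<tau>
    using scheme[OF that] tder_eq[OF du[OF that] that] h by simp
  have w_cont: "continuous_on {0..1} w"
    by (rule Yh_continuous_on[OF w phi_cont h])
  have "p \<in> Yh \<phi> r h" using p unfolding is_Ph_def by blast
  then have p_cont: "continuous_on {0..1} p"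
    by (rule Yh_continuous_on[OF _ phi_cont h])
  have "continuous_on {0..1} u"
    using du has_vector_derivative_continuous continuous_on_eq_continuous_within by blast
  then have gradU_u_cont: "continuous_on {0..1} (\<lambda>\<sigma>. gradU (u \<sigma>))"
    by (rule continuous_on_compose2[OF gradU_cont]) auto
  have "U (u 1) - U (u 0) = h * integral {0..1} (\<lambda>\<tau>. w \<tau> \<bullet> gradU (u \<tau>))"
    using has_integral_energy_change[OF U_grad du] integral_mult_right by (auto dest: integral_unique)
  also have "\<dots> = h * integral {0..1} (\<lambda>\<tau>. w \<tau> \<bullet> p \<tau>)"
    using is_Ph_integral_inner[OF p w w_cont gradU_u_cont p_cont] by simp
  also have "\<dots> \<le> 0"
  proof -
    have "0 \<le> integral {0..1} (\<lambda>\<tau>. - (w \<tau> \<bullet> p \<tau>))"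
      using quadratic_form_nonneg_if_dominates_pd[OF G_ge Gamma_pd] p_eq
      by (intro integral_nonneg integrable_continuous_real continuous_intros w_cont p_cont) simp
    then show ?thesis using h by (simp add: integral_neg mult_nonneg_nonpos)
  qed
  finally show ?thesis using u_init by simp
qed

end
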